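(* Let $U$ be a finite set of users, $R$ a finite set of resources, $w_c$ a user-independent weighted constraint, and $A_1,A_2\subseteq U\times R$ two authorization relations such that $\mathrm{usr}_{A_1}(T)=\mathrm{usr}_{A_2}(T)$ for all $T\subseteq R$. Then $w_c(A_1)=w_c(A_2)$.
   Context: A weighted constraint is a function $w_c:2^{U\times R}\to\mathbb{N}$. It is user-independent if $w_c(\sigma(A))=w_c(A)$ for every $A\subseteq U\times R$ and every permutation $\sigma$ of $U$, where $\sigma(A)=\{(\sigma(u),r):(u,r)\in A\}$. For $A\subseteq U\times R$ and $u\in U$, $A(u)=\{r:(u,r)\in A\}$. The user profile of $A$ is $\mathrm{usr}_A:2^R\to\mathbb{N}$, $\mathrm{usr}_A(T)=|\{u\in U:A(u)=T\}|$. *)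

theory Defs
  imports Main "HOL-Combinatorics.Permutations"
begin

definition auth_of :: "('u \<times> 'r) set \<Rightarrow> 'u \<Rightarrow> 'r set" where
  "auth_of A u = {r. (u, r) \<in> A}"

definition perm_rel :: "('u \<Rightarrow> 'u) \<Rightarrow> ('u \<times> 'r) set \<Rightarrow> ('u \<times> 'r) set" where
  "perm_rel \<sigma> A = {(\<sigma> u, r) | u r. (u, r) \<in> A}"

definition user_independent :: "'u set \<Rightarrow> 'r set \<Rightarrow> (('u \<times> 'r) set \<Rightarrow> nat) \<Rightarrow> bool" where
  "user_independent U R w \<longleftrightarrow>
     (\<forall>A \<sigma>. A \<subseteq> U \<times> R \<longrightarrow> \<sigma> permutes U \<longrightarrow> w (perm_rel \<sigma> A) = w A)"

definition usr :: "'u set \<Rightarrow> ('u \<times> 'r) set \<Rightarrow> 'r set \<Rightarrow> nat" where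
  "usr U A T = card {u \<in> U. auth_of A u = T}"

end

theory Submission
  imports Defs
begin

text \<open>Users with the same set of authorisations are interchangeable. Equal user profiles
  mean that, for every T, the fibres of u \<mapsto> A1(u) and u \<mapsto> A2(u) over T have the
  same size; gluing bijections between corresponding fibres gives a permutation \<sigma> of U
  with A2(\<sigma> u) = A1(u), i.e. \<sigma>(A1) = A2, and user independence gives w(A1) = w(A2).\<close>

lemma permutes_matching_fibres:
  assumes "finite U"
    and fibres: "\<And>y. card {x \<in> U. f x = y} = card {x \<in> U. g x = y}"
  obtains \<sigma> where "\<sigma> permutes U" and "\<And>x. x \<in> U \<Longrightarrow> g (\<sigma> x) = f x"
proof -
  have "\<exists>h. bij_betw h {x \<in> U. f x = y} {x \<in> U. g x = y}" for y
    using assms by (intro finite_same_card_bij) auto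
  then obtain h where h: "\<And>y. bij_betw (h y) {x \<in> U. f x = y} {x \<in> U. g x = y}"
    by metis
  define \<sigma> where "\<sigma> x = (if x \<in> U then h (f x) x else x)" for x
  have maps: "\<sigma> x \<in> U \<and> g (\<sigma> x) = f x" if "x \<in> U" for x
    using bij_betwE[OF h[of "f x"]] that by (auto simp: \<sigma>_def)
  have "inj_on \<sigma> U"
  proof (rule inj_onI)
    fix x x' assume x: "x \<in> U" "x' \<in> U" and eq: "\<sigma> x = \<sigma> x'"
    then have "f x = f x'" using maps by metis
    with x eq have "h (f x) x = h (f x) x'" "x \<in> {z \<in> U. f z = f x}" "x' \<in> {z \<in> U. f z = f x}"
      by (auto simp: \<sigma>_def)
    then show "x = x'" using bij_betw_imp_inj_on[OF h[of "f x"]] by (auto dest: inj_onD)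
  qed
  moreover have "\<sigma> ` U = U"
    using endo_inj_surj[OF \<open>finite U\<close> _ \<open>inj_on \<sigma> U\<close>] maps by blast
  ultimately have "\<sigma> permutes U"
    by (intro bij_imp_permutes) (auto simp: bij_betw_def \<sigma>_def)
  with maps show thesis using that by blast
qed

lemma perm_rel_eqI:
  assumes "\<sigma> permutes U" and "Domain A \<subseteq> U" and "Domain B \<subseteq> U"
    and "\<And>u. u \<in> U \<Longrightarrow> auth_of B (\<sigma> u) = auth_of A u"
  shows "perm_rel \<sigma> A = B"
proof (intro set_eqI iffI)
  fix p assume "p \<in> perm_rel \<sigma> A"
  then obtain u r where "p = (\<sigma> u, r)" "(u, r) \<in> A" by (auto simp: perm_rel_def)
  with assms(2) assms(4)[of u] show "p \<in> B" by (auto simp: auth_of_def)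
next
  fix p assume p: "p \<in> B"
  obtain v r where vr: "p = (v, r)" by (cases p)
  with p assms(3) have "v \<in> U" by auto
  then obtain u where "u \<in> U" "v = \<sigma> u"
    using permutes_image[OF assms(1)] by blast
  with p vr assms(4)[of u] show "p \<in> perm_rel \<sigma> A"
    by (auto simp: perm_rel_def auth_of_def)
qed

theorem lemma4p8:
  fixes U :: "'u set" and R :: "'r set" and w :: "('u \<times> 'r) set \<Rightarrow> nat"
    and A1 A2 :: "('u \<times> 'r) set"
  assumes "finite U" and "finite R"
    and "user_independent U R w"
    and "A1 \<subseteq> U \<times> R" and "A2 \<subseteq> U \<times> R"
    and "\<forall>T. T \<subseteq> R \<longrightarrow> usr U A1 T = usr U A2 T"
  shows "w A1 = w A2"
proof -
  have "card {u \<in> U. auth_of A1 u = T} = card {u \<in> U. auth_of A2 u = T}" for T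
  proof (cases "T \<subseteq> R")
    case True
    with assms(6) show ?thesis by (simp add: usr_def)
  next
    case False
    with assms(4,5) have "{u \<in> U. auth_of A1 u = T} = {}" "{u \<in> U. auth_of A2 u = T} = {}"
      by (auto simp: auth_of_def)
    then show ?thesis by (simp only: card.empty)
  qed
  with \<open>finite U\<close> obtain \<sigma> where \<sigma>: "\<sigma> permutes U"
    and "\<And>u. u \<in> U \<Longrightarrow> auth_of A2 (\<sigma> u) = auth_of A1 u"
    by (rule permutes_matching_fibres) blast
  with assms(4,5) have "perm_rel \<sigma> A1 = A2"
    by (intro perm_rel_eqI) auto
  with assms(3,4) \<sigma> show ?thesis
    unfolding user_independent_def by metis
qed

end
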